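(* Let $(X,\mathcal{M})$ be a measurable space, $\Sigma$ a compact Hausdorff group with Haar probability measure $\mu_\Sigma$, and $T:\Sigma\times X\to X$ a measurable group action. Let $V\subset\mathcal{M}_b(X)$ be a separable reproducing kernel Hilbert space with reproducing kernel $k:X\times X\to\mathbb{R}$, and $\Gamma=\{\gamma\in V:\|\gamma\|_V\le1\}$. If $k$ is $\Sigma$-invariant, i.e. $k(T_\sigma(x),T_\sigma(y))=k(x,y)$ for all $\sigma\in\Sigma$, $x,y\in X$, then $S_\Sigma[\Gamma]\subset\Gamma$.
   Context: $S_\Sigma[\gamma](x)=\int_\Sigma\gamma(T_\sigma(x))\mu_\Sigma(d\sigma)$. *)

theory Defs
  imports "HOL-Analysis.Analysis" "HOL-Probability.Probability"
begin

text \<open>Haar probability measure on a compact Hausdorff topological group (group written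
additively, not necessarily commutative): a left-invariant, regular (Radon) Borel
probability measure.\<close>
definition haar_probability :: "'g::topological_group_add measure \<Rightarrow> bool" where
  "haar_probability \<mu> \<longleftrightarrow>
     sets \<mu> = sets (borel :: 'g measure) \<and>
     prob_space \<mu> \<and>
     (\<forall>g A. A \<in> sets borel \<longrightarrow> emeasure \<mu> ((\<lambda>s. g + s) ` A) = emeasure \<mu> A) \<and>
     (\<forall>A \<in> sets borel. emeasure \<mu> A = (INF U \<in> {U. open U \<and> A \<subseteq> U}. emeasure \<mu> U)) \<and>
     (\<forall>U. open U \<longrightarrow> emeasure \<mu> U = (SUP K \<in> {K. compact K \<and> K \<subseteq> U}. emeasure \<mu> K))"

definition measurable_action :: "'a measure \<Rightarrow> ('g::topological_group_add \<Rightarrow> 'a \<Rightarrow> 'a) \<Rightarrow> bool" where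
  "measurable_action M T \<longleftrightarrow>
     (\<lambda>(s, x). T s x) \<in> measurable (borel \<Otimes>\<^sub>M M) M \<and>
     (\<forall>x \<in> space M. T 0 x = x) \<and>
     (\<forall>s t. \<forall>x \<in> space M. T (s + t) x = T s (T t x))"

text \<open>Functions on \<open>X\<close> are represented extensionally (value 0 outside \<open>X\<close>).\<close>
definition ext0 :: "'a set \<Rightarrow> ('a \<Rightarrow> real) \<Rightarrow> ('a \<Rightarrow> real)" where
  "ext0 X f = (\<lambda>x. if x \<in> X then f x else 0)"

definition hnorm :: "(('a \<Rightarrow> real) \<Rightarrow> ('a \<Rightarrow> real) \<Rightarrow> real) \<Rightarrow> ('a \<Rightarrow> real) \<Rightarrow> real" where
  "hnorm ip f = sqrt (ip f f)"

definition rkhs :: "'a set \<Rightarrow> ('a \<Rightarrow> real) set \<Rightarrow> (('a \<Rightarrow> real) \<Rightarrow> ('a \<Rightarrow> real) \<Rightarrow> real)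
                     \<Rightarrow> ('a \<Rightarrow> 'a \<Rightarrow> real) \<Rightarrow> bool" where
  "rkhs X V ip k \<longleftrightarrow>
     (\<forall>f \<in> V. ext0 X f = f) \<and>
     (\<lambda>x. 0) \<in> V \<and>
     (\<forall>f \<in> V. \<forall>g \<in> V. (\<lambda>x. f x + g x) \<in> V) \<and>
     (\<forall>c. \<forall>f \<in> V. (\<lambda>x. c * f x) \<in> V) \<and>
     (\<forall>f \<in> V. \<forall>g \<in> V. ip f g = ip g f) \<and>
     (\<forall>f \<in> V. \<forall>g \<in> V. \<forall>h \<in> V. ip (\<lambda>x. f x + g x) h = ip f h + ip g h) \<and>
     (\<forall>c. \<forall>f \<in> V. \<forall>g \<in> V. ip (\<lambda>x. c * f x) g = c * ip f g) \<and>
     (\<forall>f \<in> V. ip f f \<ge> 0) \<and>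
     (\<forall>f \<in> V. ip f f = 0 \<longrightarrow> f = (\<lambda>x. 0)) \<and>
     (\<forall>s. (\<forall>n. s n \<in> V) \<longrightarrow>
          (\<forall>e>0. \<exists>N. \<forall>m\<ge>N. \<forall>n\<ge>N. hnorm ip (\<lambda>x. s m x - s n x) < e) \<longrightarrow>
          (\<exists>f \<in> V. (\<lambda>n. hnorm ip (\<lambda>x. s n x - f x)) \<longlonglongrightarrow> 0)) \<and>
     (\<forall>y \<in> X. ext0 X (\<lambda>x. k x y) \<in> V \<and> (\<forall>f \<in> V. ip f (ext0 X (\<lambda>x. k x y)) = f y))"

definition separable_hs :: "('a \<Rightarrow> real) set \<Rightarrow> (('a \<Rightarrow> real) \<Rightarrow> ('a \<Rightarrow> real) \<Rightarrow> real) \<Rightarrow> bool" where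
  "separable_hs V ip \<longleftrightarrow>
     (\<exists>D \<subseteq> V. countable D \<and> (\<forall>f \<in> V. \<forall>e>0. \<exists>d \<in> D. hnorm ip (\<lambda>x. f x - d x) < e))"

definition symmetrize :: "'g measure \<Rightarrow> 'a measure \<Rightarrow> ('g \<Rightarrow> 'a \<Rightarrow> 'a) \<Rightarrow> ('a \<Rightarrow> real) \<Rightarrow> ('a \<Rightarrow> real)" where
  "symmetrize \<mu> M T \<gamma> = ext0 (space M) (\<lambda>x. \<integral>\<sigma>. \<gamma> (T \<sigma> x) \<partial>\<mu>)"

end

theory Submission
  imports Defs
begin

(* By the reproducing property, S[gamma](y) is the average over sigma of <gamma, k_(T_sigma y)>.
   Invariance of k makes g |-> g o T_(-sigma) an isometry on the span of the kernel sections
   k_y, so the linear functional k_y |-> S[gamma](y) on that span is bounded by ||gamma||.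
   A Riesz-type argument produces a representer of norm at most ||gamma|| in V: maximising
   sequences of the functional on the unit ball are Cauchy by the parallelogram law, and the
   first-order condition at their limit h shows that the functional is a multiple of <h, ->.
   A representer r satisfies r y = <r, k_y> = S[gamma](y), so r is S[gamma] itself. *)

lemma slope_eq_if_le_sqrt_quadratic:
  fixes s l a b :: real
  assumes "s > 0" and le: "\<And>t. s + t * l \<le> s * sqrt (1 + 2 * t * a + t\<^sup>2 * b)"
  shows "l = s * a"
proof -
  define \<phi> where "\<phi> t = s * sqrt (1 + 2 * t * a + t\<^sup>2 * b) - (s + t * l)" for t
  have deriv: "DERIV \<phi> 0 :> s * a - l"
    unfolding \<phi>_def by (auto intro!: derivative_eq_intros)
  have "\<phi> 0 \<le> \<phi> t" for t
    using le[of t] by (simp add: \<phi>_def)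
  then have "s * a - l = 0"
    by (intro DERIV_local_min[OF deriv, of 1]) auto
  then show ?thesis by simp
qed

locale function_hilbert_space =
  fixes V :: "('a \<Rightarrow> real) set" and ip :: "('a \<Rightarrow> real) \<Rightarrow> ('a \<Rightarrow> real) \<Rightarrow> real"
  assumes zero_in_V: "(\<lambda>x. 0) \<in> V"
    and add_in_V: "f \<in> V \<Longrightarrow> g \<in> V \<Longrightarrow> (\<lambda>x. f x + g x) \<in> V"
    and scale_in_V: "f \<in> V \<Longrightarrow> (\<lambda>x. c * f x) \<in> V"
    and ip_commute: "f \<in> V \<Longrightarrow> g \<in> V \<Longrightarrow> ip f g = ip g f"
    and ip_add_left: "f \<in> V \<Longrightarrow> g \<in> V \<Longrightarrow> h \<in> V \<Longrightarrow> ip (\<lambda>x. f x + g x) h = ip f h + ip g h"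
    and ip_scale_left: "f \<in> V \<Longrightarrow> g \<in> V \<Longrightarrow> ip (\<lambda>x. c * f x) g = c * ip f g"
    and ip_self_nonneg: "f \<in> V \<Longrightarrow> 0 \<le> ip f f"
    and ip_self_eq_0: "f \<in> V \<Longrightarrow> ip f f = 0 \<Longrightarrow> f = (\<lambda>x. 0)"
    and complete: "(\<And>n. s n \<in> V) \<Longrightarrow>
      (\<And>e. e > 0 \<Longrightarrow> \<exists>N. \<forall>m\<ge>N. \<forall>n\<ge>N. hnorm ip (\<lambda>x. s m x - s n x) < e) \<Longrightarrow>
      \<exists>f\<in>V. (\<lambda>n. hnorm ip (\<lambda>x. s n x - f x)) \<longlonglongrightarrow> 0"

lemma rkhs_imp_function_hilbert_space:
  assumes "rkhs X V ip k"
  shows "function_hilbert_space V ip"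
  using assms unfolding rkhs_def by unfold_locales blast+

context function_hilbert_space
begin

lemma lincomb_in_V: "f \<in> V \<Longrightarrow> g \<in> V \<Longrightarrow> (\<lambda>x. a * f x + b * g x) \<in> V"
  by (intro add_in_V scale_in_V)

lemma diff_in_V: "f \<in> V \<Longrightarrow> g \<in> V \<Longrightarrow> (\<lambda>x. f x - g x) \<in> V"
  using lincomb_in_V[of f g 1 "-1"] by simp

lemma ip_add_right:
  assumes "f \<in> V" "g \<in> V" "h \<in> V"
  shows "ip h (\<lambda>x. f x + g x) = ip h f + ip h g"
  using ip_commute[OF assms(3) add_in_V[OF assms(1,2)]] ip_add_left[OF assms]
    ip_commute[OF assms(1,3)] ip_commute[OF assms(2,3)] by simp

lemma ip_scale_right:
  assumes "f \<in> V" "g \<in> V"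
  shows "ip g (\<lambda>x. c * f x) = c * ip g f"
  using ip_commute[OF assms(2) scale_in_V[OF assms(1)]] ip_scale_left[OF assms]
    ip_commute[OF assms] by simp

lemma ip_zero_left: "g \<in> V \<Longrightarrow> ip (\<lambda>x. 0) g = 0"
  using ip_scale_left[OF zero_in_V, of g 0] by simp

lemma ip_zero_right: "g \<in> V \<Longrightarrow> ip g (\<lambda>x. 0) = 0"
  using ip_zero_left ip_commute zero_in_V by simp

lemma ip_lincomb_self:
  assumes "f \<in> V" "g \<in> V"
  shows "ip (\<lambda>x. a * f x + b * g x) (\<lambda>x. a * f x + b * g x)
    = a\<^sup>2 * ip f f + 2 * a * b * ip f g + b\<^sup>2 * ip g g"
  using assms by (simp add: ip_add_left ip_add_right ip_scale_left ip_scale_right lincomb_in_V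
      scale_in_V ip_commute[of g f] power2_eq_square algebra_simps)

lemma hnorm_nonneg: "f \<in> V \<Longrightarrow> 0 \<le> hnorm ip f"
  by (simp add: hnorm_def ip_self_nonneg)

lemma hnorm_power2: "f \<in> V \<Longrightarrow> (hnorm ip f)\<^sup>2 = ip f f"
  by (simp add: hnorm_def ip_self_nonneg)

lemma hnorm_scale:
  assumes "f \<in> V"
  shows "hnorm ip (\<lambda>x. c * f x) = \<bar>c\<bar> * hnorm ip f"
proof -
  have "ip (\<lambda>x. c * f x) (\<lambda>x. c * f x) = c\<^sup>2 * ip f f"
    using assms by (simp add: ip_scale_left ip_scale_right scale_in_V power2_eq_square)
  then show ?thesis by (simp add: hnorm_def real_sqrt_mult)
qed

lemma ip_cauchy_schwarz:
  assumes f: "f \<in> V" and g: "g \<in> V"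
  shows "\<bar>ip f g\<bar> \<le> hnorm ip f * hnorm ip g"
proof -
  have "(ip f g)\<^sup>2 \<le> ip f f * ip g g"
  proof (cases "ip g g = 0")
    case True
    then show ?thesis using f g ip_self_eq_0 ip_zero_right by simp
  next
    case False
    then have pos: "ip g g > 0" using ip_self_nonneg[OF g] by simp
    define t where "t = ip f g / ip g g"
    have "0 \<le> ip (\<lambda>x. 1 * f x + (- t) * g x) (\<lambda>x. 1 * f x + (- t) * g x)"
      using f g by (intro ip_self_nonneg lincomb_in_V)
    also have "\<dots> = ip f f - 2 * t * ip f g + t\<^sup>2 * ip g g"
      using ip_lincomb_self[OF f g, of 1 "- t"] by simp
    also have "\<dots> = ip f f - (ip f g)\<^sup>2 / ip g g"
      using pos by (simp add: t_def field_simps power2_eq_square)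
    finally show ?thesis using pos by (simp add: field_simps)
  qed
  then have "sqrt ((ip f g)\<^sup>2) \<le> sqrt (ip f f * ip g g)"
    by (rule real_sqrt_le_mono)
  then show ?thesis by (simp add: hnorm_def real_sqrt_mult)
qed

lemma hnorm_triangle:
  assumes f: "f \<in> V" and g: "g \<in> V"
  shows "hnorm ip (\<lambda>x. f x + g x) \<le> hnorm ip f + hnorm ip g"
proof (rule power2_le_imp_le)
  have "(hnorm ip (\<lambda>x. f x + g x))\<^sup>2 = ip f f + 2 * ip f g + ip g g"
    using ip_lincomb_self[OF f g, of 1 1] by (simp add: hnorm_power2 add_in_V f g)
  also have "\<dots> \<le> (hnorm ip f + hnorm ip g)\<^sup>2"
    using ip_cauchy_schwarz[OF f g] by (simp add: power2_sum hnorm_power2 f g)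
  finally show "(hnorm ip (\<lambda>x. f x + g x))\<^sup>2 \<le> (hnorm ip f + hnorm ip g)\<^sup>2" .
qed (simp add: hnorm_nonneg f g)

lemma hnorm_diff_commute:
  "f \<in> V \<Longrightarrow> g \<in> V \<Longrightarrow> hnorm ip (\<lambda>x. f x - g x) = hnorm ip (\<lambda>x. g x - f x)"
  using hnorm_scale[OF diff_in_V, of f g "-1"] by simp

lemma hnorm_reverse_triangle:
  assumes f: "f \<in> V" and g: "g \<in> V"
  shows "\<bar>hnorm ip f - hnorm ip g\<bar> \<le> hnorm ip (\<lambda>x. f x - g x)"
  using hnorm_triangle[OF g diff_in_V[OF f g]] hnorm_triangle[OF f diff_in_V[OF g f]]
    hnorm_diff_commute[OF f g] by (simp add: abs_le_iff)

lemma hnorm_tendsto: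
  assumes "\<And>n. G n \<in> V" "h \<in> V" and "(\<lambda>n. hnorm ip (\<lambda>x. G n x - h x)) \<longlonglongrightarrow> 0"
  shows "(\<lambda>n. hnorm ip (G n)) \<longlonglongrightarrow> hnorm ip h"
proof (rule LIM_zero_cancel, rule Lim_null_comparison[OF _ assms(3)])
  show "\<forall>\<^sub>F n in sequentially. norm (hnorm ip (G n) - hnorm ip h) \<le> hnorm ip (\<lambda>x. G n x - h x)"
    using hnorm_reverse_triangle assms(1,2) by simp
qed

lemma unit_ball_uniformly_convex:
  assumes f: "f \<in> V" and g: "g \<in> V" and "hnorm ip f \<le> 1" "hnorm ip g \<le> 1"
    and "0 \<le> d" and sum: "2 - d \<le> hnorm ip (\<lambda>x. f x + g x)"
  shows "(hnorm ip (\<lambda>x. f x - g x))\<^sup>2 \<le> 4 * d"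
proof -
  have "4 - 4 * d \<le> (hnorm ip (\<lambda>x. f x + g x))\<^sup>2"
  proof (cases "d \<le> 2")
    case True
    then have "(2 - d)\<^sup>2 \<le> (hnorm ip (\<lambda>x. f x + g x))\<^sup>2"
      using sum by (intro power_mono) auto
    moreover have "(2 - d)\<^sup>2 = 4 - 4 * d + d\<^sup>2"
      by (simp add: power2_diff)
    ultimately show ?thesis using zero_le_power2[of d] by linarith
  next
    case False
    then show ?thesis using zero_le_power2[of "hnorm ip (\<lambda>x. f x + g x)"] by linarith
  qed
  moreover have "(hnorm ip f)\<^sup>2 \<le> 1" "(hnorm ip g)\<^sup>2 \<le> 1"
    using assms hnorm_nonneg by (simp_all add: power_le_one)
  moreover have "(hnorm ip (\<lambda>x. f x - g x))\<^sup>2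
      = 2 * (hnorm ip f)\<^sup>2 + 2 * (hnorm ip g)\<^sup>2 - (hnorm ip (\<lambda>x. f x + g x))\<^sup>2"
    using ip_lincomb_self[OF f g, of 1 1] ip_lincomb_self[OF f g, of 1 "-1"]
    by (simp add: hnorm_power2 f g add_in_V diff_in_V)
  ultimately show ?thesis by linarith
qed

end

(* R is the graph of a linear functional of norm at most C on a subspace of V; it need not be
   single-valued a priori, as graph_bounded forces this. *)
locale bounded_functional_graph = function_hilbert_space V ip
  for V :: "('a \<Rightarrow> real) set" and ip +
  fixes R :: "(('a \<Rightarrow> real) \<times> real) set" and C :: real
  assumes graph_in_V: "(g, l) \<in> R \<Longrightarrow> g \<in> V"
    and graph_zero: "((\<lambda>x. 0), 0) \<in> R"
    and graph_add: "(g1, l1) \<in> R \<Longrightarrow> (g2, l2) \<in> R \<Longrightarrow> ((\<lambda>x. g1 x + g2 x), l1 + l2) \<in> R"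
    and graph_scale: "(g, l) \<in> R \<Longrightarrow> ((\<lambda>x. c * g x), c * l) \<in> R"
    and graph_bounded: "(g, l) \<in> R \<Longrightarrow> \<bar>l\<bar> \<le> C * hnorm ip g"
    and bound_nonneg: "0 \<le> C"
begin

definition unit_values :: "real set" where
  "unit_values = {l. \<exists>g. (g, l) \<in> R \<and> hnorm ip g \<le> 1}"

definition functional_norm :: real where
  "functional_norm = Sup unit_values"

lemma zero_in_unit_values: "0 \<in> unit_values"
  using graph_zero by (auto simp: unit_values_def hnorm_def ip_zero_left zero_in_V)

lemma unit_values_le:
  assumes "l \<in> unit_values"
  shows "l \<le> C"
proof -
  obtain g where g: "(g, l) \<in> R" "hnorm ip g \<le> 1"
    using assms unfolding unit_values_def by blast
  have "\<bar>l\<bar> \<le> C * hnorm ip g"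
    using graph_bounded[OF g(1)] .
  also have "\<dots> \<le> C"
    using g(2) bound_nonneg by (rule mult_left_le)
  finally show ?thesis by simp
qed

lemma bdd_above_unit_values: "bdd_above unit_values"
  using unit_values_le by (rule bdd_aboveI)

lemma functional_norm_nonneg: "0 \<le> functional_norm"
  unfolding functional_norm_def by (rule cSup_upper[OF zero_in_unit_values bdd_above_unit_values])

lemma functional_norm_le: "functional_norm \<le> C"
  unfolding functional_norm_def using zero_in_unit_values unit_values_le by (blast intro: cSup_least)

lemma graph_le_functional_norm:
  assumes gl: "(g, l) \<in> R"
  shows "l \<le> functional_norm * hnorm ip g"
proof (cases "hnorm ip g = 0")
  case True
  then show ?thesis using graph_bounded[OF gl] by simp
next
  case False
  then have pos: "hnorm ip g > 0" using hnorm_nonneg[OF graph_in_V[OF gl]] by simp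
  define c where "c = 1 / hnorm ip g"
  have "hnorm ip (\<lambda>x. c * g x) = \<bar>c\<bar> * hnorm ip g"
    using graph_in_V[OF gl] by (rule hnorm_scale)
  also have "\<dots> = 1"
    using pos by (simp add: c_def)
  finally have "hnorm ip (\<lambda>x. c * g x) = 1" .
  then have "c * l \<in> unit_values"
    unfolding unit_values_def using graph_scale[OF gl, of c] by fastforce
  then have "c * l \<le> functional_norm"
    unfolding functional_norm_def by (rule cSup_upper[OF _ bdd_above_unit_values])
  then show ?thesis using pos by (simp add: c_def field_simps)
qed

lemma maximizing_sequence_exists:
  obtains G L where "\<And>n. (G n, L n) \<in> R" "\<And>n. hnorm ip (G n) \<le> 1" "L \<longlonglongrightarrow> functional_norm"
proof -
  have "functional_norm \<in> closure unit_values"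
    unfolding functional_norm_def using zero_in_unit_values bdd_above_unit_values
    by (intro closure_contains_Sup) auto
  then obtain L where L: "\<And>n. L n \<in> unit_values" "L \<longlonglongrightarrow> functional_norm"
    by (auto simp: closure_sequential)
  then have "\<forall>n. \<exists>g. (g, L n) \<in> R \<and> hnorm ip g \<le> 1"
    by (auto simp: unit_values_def)
  from choice[OF this] obtain G where "\<forall>n. (G n, L n) \<in> R \<and> hnorm ip (G n) \<le> 1"
    by blast
  with L show thesis using that by blast
qed

context
  fixes G :: "nat \<Rightarrow> 'a \<Rightarrow> real" and L :: "nat \<Rightarrow> real"
  assumes graph_seq: "\<And>n. (G n, L n) \<in> R"
    and unit_seq: "\<And>n. hnorm ip (G n) \<le> 1"
    and maximizing: "L \<longlonglongrightarrow> functional_norm"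
    and functional_norm_pos: "0 < functional_norm"
begin

lemma maximizing_sequence_in_V: "G n \<in> V"
  using graph_in_V[OF graph_seq] .

lemma maximizing_sequence_Cauchy:
  assumes "e > 0"
  shows "\<exists>N. \<forall>m\<ge>N. \<forall>n\<ge>N. hnorm ip (\<lambda>x. G m x - G n x) < e"
proof -
  let ?s = functional_norm
  obtain N where N: "\<And>n. n \<ge> N \<Longrightarrow> \<bar>L n - ?s\<bar> < e\<^sup>2 * ?s / 8"
    using LIMSEQ_D[OF maximizing, of "e\<^sup>2 * ?s / 8"] assms functional_norm_pos by auto
  have L_le: "L n \<le> ?s" for n
    using graph_le_functional_norm[OF graph_seq[of n]] mult_left_le[OF unit_seq[of n], of ?s] functional_norm_pos
    by linarith
  have "hnorm ip (\<lambda>x. G m x - G n x) < e" if "m \<ge> N" "n \<ge> N" for m n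
  proof -
    define d where "d = (?s - L m + (?s - L n)) / ?s"
    have close: "?s - L k < e\<^sup>2 * ?s / 8" if "k \<ge> N" for k
      using N[OF that] abs_ge_minus_self[of "L k - ?s"] by linarith
    have "?s - L m + (?s - L n) < e\<^sup>2 / 4 * ?s"
      using close[OF \<open>m \<ge> N\<close>] close[OF \<open>n \<ge> N\<close>] by linarith
    then have d: "0 \<le> d" "d < e\<^sup>2 / 4"
      using L_le[of m] L_le[of n] functional_norm_pos by (simp_all add: d_def pos_divide_less_eq)
    have "L m + L n \<le> ?s * hnorm ip (\<lambda>x. G m x + G n x)"
      by (rule graph_le_functional_norm[OF graph_add[OF graph_seq graph_seq]])
    moreover have "2 - d = (L m + L n) / ?s"
      using functional_norm_pos by (simp add: d_def field_simps)
    ultimately have "2 - d \<le> hnorm ip (\<lambda>x. G m x + G n x)"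
      using functional_norm_pos by (simp add: pos_divide_le_eq mult.commute)
    then have "(hnorm ip (\<lambda>x. G m x - G n x))\<^sup>2 \<le> 4 * d"
      by (rule unit_ball_uniformly_convex[OF maximizing_sequence_in_V maximizing_sequence_in_V unit_seq unit_seq d(1)])
    with d(2) have "(hnorm ip (\<lambda>x. G m x - G n x))\<^sup>2 < e\<^sup>2"
      by linarith
    then show ?thesis
      using assms by (auto intro: power_less_imp_less_base)
  qed
  then show ?thesis by blast
qed

lemma maximizing_sequence_limit:
  obtains h where "h \<in> V" "hnorm ip h \<le> 1" "(\<lambda>n. hnorm ip (\<lambda>x. G n x - h x)) \<longlonglongrightarrow> 0"
proof -
  obtain h where h: "h \<in> V" "(\<lambda>n. hnorm ip (\<lambda>x. G n x - h x)) \<longlonglongrightarrow> 0"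
    using complete[OF maximizing_sequence_in_V maximizing_sequence_Cauchy] by blast
  have "hnorm ip h \<le> 1"
    by (rule LIMSEQ_le_const2[OF hnorm_tendsto[OF maximizing_sequence_in_V h]]) (use unit_seq in auto)
  with h that show thesis by blast
qed

lemma graph_eq_functional_norm_ip:
  assumes h: "h \<in> V" "hnorm ip h \<le> 1" "(\<lambda>n. hnorm ip (\<lambda>x. G n x - h x)) \<longlonglongrightarrow> 0"
    and gl: "(g, l) \<in> R"
  shows "l = functional_norm * ip h g"
proof (rule slope_eq_if_le_sqrt_quadratic[OF functional_norm_pos])
  \<comment> \<open>\<open>h\<close> maximises the functional on the unit ball, so \<open>t = 0\<close> is a minimum below.\<close>
  fix t :: real
  let ?s = functional_norm
  have g: "g \<in> V" using graph_in_V[OF gl] .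
  have tg: "(\<lambda>x. t * g x) \<in> V"
    using g by (rule scale_in_V)
  have "L n + t * l \<le> ?s * hnorm ip (\<lambda>x. G n x + t * g x)" for n
    by (rule graph_le_functional_norm[OF graph_add[OF graph_seq graph_scale[OF gl]]])
  moreover have "(\<lambda>n. L n + t * l) \<longlonglongrightarrow> ?s + t * l"
    by (intro tendsto_add maximizing tendsto_const)
  moreover have "(\<lambda>n. hnorm ip (\<lambda>x. G n x + t * g x)) \<longlonglongrightarrow> hnorm ip (\<lambda>x. h x + t * g x)"
    using hnorm_tendsto[OF add_in_V[OF maximizing_sequence_in_V tg] add_in_V[OF h(1) tg]] h(3) by simp
  ultimately have limit: "?s + t * l \<le> ?s * hnorm ip (\<lambda>x. h x + t * g x)"
    by (intro LIMSEQ_le[OF _ tendsto_mult_left]) auto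
  have "ip h h \<le> 1"
    using h(2) hnorm_nonneg[OF h(1)] by (simp add: hnorm_def)
  then have "hnorm ip (\<lambda>x. h x + t * g x) \<le> sqrt (1 + 2 * t * ip h g + t\<^sup>2 * ip g g)"
    using ip_lincomb_self[OF h(1) g, of 1 t] by (simp add: hnorm_def)
  then have "?s * hnorm ip (\<lambda>x. h x + t * g x) \<le> ?s * sqrt (1 + 2 * t * ip h g + t\<^sup>2 * ip g g)"
    using functional_norm_pos by simp
  with limit show "?s + t * l \<le> ?s * sqrt (1 + 2 * t * ip h g + t\<^sup>2 * ip g g)"
    by linarith
qed

end

theorem representer_exists:
  obtains h where "h \<in> V" "hnorm ip h \<le> C" "\<And>g l. (g, l) \<in> R \<Longrightarrow> ip h g = l"
proof (cases "functional_norm = 0")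
  case True
  have "ip (\<lambda>x. 0) g = l" if gl: "(g, l) \<in> R" for g l
    using graph_le_functional_norm[OF gl] graph_le_functional_norm[OF graph_scale[OF gl, of "-1"]]
      True ip_zero_left[OF graph_in_V[OF gl]] by simp
  then show thesis
    using that[of "\<lambda>x. 0"] zero_in_V bound_nonneg by (simp add: hnorm_def ip_zero_left)
next
  case False
  then have pos: "0 < functional_norm" using functional_norm_nonneg by simp
  obtain G L where seq: "\<And>n. (G n, L n) \<in> R" "\<And>n. hnorm ip (G n) \<le> 1" "L \<longlonglongrightarrow> functional_norm"
    using maximizing_sequence_exists by blast
  obtain h where h: "h \<in> V" "hnorm ip h \<le> 1" "(\<lambda>n. hnorm ip (\<lambda>x. G n x - h x)) \<longlonglongrightarrow> 0"
    using maximizing_sequence_limit[OF seq pos] .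
  show thesis
  proof (rule that[of "\<lambda>x. functional_norm * h x"])
    show "(\<lambda>x. functional_norm * h x) \<in> V" using scale_in_V[OF h(1)] .
    have "functional_norm * hnorm ip h \<le> functional_norm"
      using h(2) functional_norm_nonneg by (rule mult_left_le)
    moreover have "hnorm ip (\<lambda>x. functional_norm * h x) = functional_norm * hnorm ip h"
      using hnorm_scale[OF h(1)] pos by simp
    ultimately show "hnorm ip (\<lambda>x. functional_norm * h x) \<le> C"
      using functional_norm_le by linarith
    show "ip (\<lambda>x. functional_norm * h x) g = l" if "(g, l) \<in> R" for g l
      using graph_eq_functional_norm_ip[OF seq pos h that] ip_scale_left[OF h(1) graph_in_V[OF that]]
      by simp
  qed
qed

end

(* The linear extension of k_y |-> f y to the span of the kernel sections, taken as a relation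
   so that no well-definedness argument is needed. *)
inductive_set kernel_graph ::
    "'a set \<Rightarrow> ('a \<Rightarrow> 'a \<Rightarrow> real) \<Rightarrow> ('a \<Rightarrow> real) \<Rightarrow> (('a \<Rightarrow> real) \<times> real) set"
  for X k f
where
  zero: "((\<lambda>x. 0), 0) \<in> kernel_graph X k f"
| kernel: "y \<in> X \<Longrightarrow> (ext0 X (\<lambda>x. k x y), f y) \<in> kernel_graph X k f"
| add: "(g1, l1) \<in> kernel_graph X k f \<Longrightarrow> (g2, l2) \<in> kernel_graph X k f \<Longrightarrow>
    ((\<lambda>x. g1 x + g2 x), l1 + l2) \<in> kernel_graph X k f"
| scale: "(g, l) \<in> kernel_graph X k f \<Longrightarrow> ((\<lambda>x. c * g x), c * l) \<in> kernel_graph X k f"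

locale invariant_kernel_action =
  fixes M :: "'a measure" and V :: "('a \<Rightarrow> real) set"
    and ip :: "('a \<Rightarrow> real) \<Rightarrow> ('a \<Rightarrow> real) \<Rightarrow> real" and k :: "'a \<Rightarrow> 'a \<Rightarrow> real"
    and \<mu> :: "'g::topological_group_add measure" and T :: "'g \<Rightarrow> 'a \<Rightarrow> 'a"
  assumes rkhs: "rkhs (space M) V ip k"
    and prob_space: "prob_space \<mu>"
    and sets_eq_borel: "sets \<mu> = sets borel"
    and action: "measurable_action M T"
    and bounded_measurable: "f \<in> V \<Longrightarrow> f \<in> borel_measurable M \<and> (\<exists>B. \<forall>x\<in>space M. \<bar>f x\<bar> \<le> B)"
    and kernel_invariant: "x \<in> space M \<Longrightarrow> y \<in> space M \<Longrightarrow> k (T \<sigma> x) (T \<sigma> y) = k x y"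
begin

sublocale function_hilbert_space V ip
  using rkhs by (rule rkhs_imp_function_hilbert_space)

definition kernel_section :: "'a \<Rightarrow> 'a \<Rightarrow> real" where
  "kernel_section y = ext0 (space M) (\<lambda>x. k x y)"

definition translate :: "'g \<Rightarrow> ('a \<Rightarrow> real) \<Rightarrow> 'a \<Rightarrow> real" where
  "translate \<sigma> g = ext0 (space M) (\<lambda>x. g (T (- \<sigma>) x))"

abbreviation graph :: "('a \<Rightarrow> real) \<Rightarrow> (('a \<Rightarrow> real) \<times> real) set" where
  "graph f \<equiv> kernel_graph (space M) k f"

lemma ext0_in_V: "f \<in> V \<Longrightarrow> ext0 (space M) f = f"
  using rkhs unfolding rkhs_def by blast

lemma kernel_section_in_V: "y \<in> space M \<Longrightarrow> kernel_section y \<in> V"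
  using rkhs unfolding rkhs_def kernel_section_def by blast

lemma ip_kernel_section: "f \<in> V \<Longrightarrow> y \<in> space M \<Longrightarrow> ip f (kernel_section y) = f y"
  using rkhs unfolding rkhs_def kernel_section_def by blast

lemma action_measurable: "(\<lambda>(s, x). T s x) \<in> measurable (borel \<Otimes>\<^sub>M M) M"
  and action_zero: "x \<in> space M \<Longrightarrow> T 0 x = x"
  and action_add: "x \<in> space M \<Longrightarrow> T (s + t) x = T s (T t x)"
  using action unfolding measurable_action_def by blast+

lemma action_in_space: "x \<in> space M \<Longrightarrow> T \<sigma> x \<in> space M"
  using measurable_space[OF action_measurable, of "(\<sigma>, x)"] by (simp add: space_pair_measure)

lemma action_neg_cancel:
  assumes "x \<in> space M"
  shows "T \<sigma> (T (- \<sigma>) x) = x" "T (- \<sigma>) (T \<sigma> x) = x"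
  using action_add[OF assms, of \<sigma> "- \<sigma>"] action_add[OF assms, of "- \<sigma>" \<sigma>] action_zero[OF assms]
  by simp_all

lemma measurable_orbit:
  assumes "y \<in> space M"
  shows "(\<lambda>\<sigma>. T \<sigma> y) \<in> measurable \<mu> M"
proof -
  have "(\<lambda>\<sigma>. (\<sigma>, y)) \<in> measurable borel (borel \<Otimes>\<^sub>M M)"
    using assms by simp
  from measurable_compose[OF this action_measurable]
  show ?thesis
    by (simp add: measurable_cong_sets[OF sets_eq_borel refl])
qed

lemma integrable_orbit:
  assumes "\<gamma> \<in> V" "y \<in> space M"
  shows "integrable \<mu> (\<lambda>\<sigma>. \<gamma> (T \<sigma> y))"
proof -
  obtain B where B: "\<forall>x\<in>space M. \<bar>\<gamma> x\<bar> \<le> B" and meas: "\<gamma> \<in> borel_measurable M"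
    using bounded_measurable[OF assms(1)] by blast
  interpret prob_space \<mu> by (rule prob_space)
  show ?thesis
  proof (rule integrable_const_bound[where B = B])
    show "AE \<sigma> in \<mu>. norm (\<gamma> (T \<sigma> y)) \<le> B"
      using B action_in_space[OF assms(2)] by simp
    show "(\<lambda>\<sigma>. \<gamma> (T \<sigma> y)) \<in> borel_measurable \<mu>"
      using measurable_compose[OF measurable_orbit[OF assms(2)] meas] .
  qed
qed

lemma translate_kernel_section:
  assumes y: "y \<in> space M"
  shows "translate \<sigma> (kernel_section y) = kernel_section (T \<sigma> y)"
proof
  fix x
  show "translate \<sigma> (kernel_section y) x = kernel_section (T \<sigma> y) x"
  proof (cases "x \<in> space M")
    case True
    have "k (T \<sigma> (T (- \<sigma>) x)) (T \<sigma> y) = k (T (- \<sigma>) x) y"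
      by (rule kernel_invariant[OF action_in_space[OF True] y])
    then have "k (T (- \<sigma>) x) y = k x (T \<sigma> y)"
      using action_neg_cancel[OF True] by simp
    then show ?thesis
      using True action_in_space by (simp add: translate_def kernel_section_def ext0_def)
  qed (simp add: translate_def kernel_section_def ext0_def)
qed

lemma translate_zero: "translate \<sigma> (\<lambda>x. 0) = (\<lambda>x. 0)"
  by (auto simp: translate_def ext0_def)

lemma translate_add: "translate \<sigma> (\<lambda>x. g1 x + g2 x) = (\<lambda>x. translate \<sigma> g1 x + translate \<sigma> g2 x)"
  by (auto simp: translate_def ext0_def)

lemma translate_scale: "translate \<sigma> (\<lambda>x. c * g x) = (\<lambda>x. c * translate \<sigma> g x)"
  by (auto simp: translate_def ext0_def)

lemma kernel_graph_in_V: "(g, l) \<in> graph f \<Longrightarrow> g \<in> V \<and> translate \<sigma> g \<in> V"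
proof (induction rule: kernel_graph.induct)
  case (kernel y)
  then show ?case
    using kernel_section_in_V translate_kernel_section action_in_space
    unfolding kernel_section_def[symmetric] by simp
qed (simp_all add: translate_zero translate_add translate_scale zero_in_V add_in_V scale_in_V)

lemma translate_isometric:
  assumes "(g, l) \<in> graph f" and g': "(g', l') \<in> graph f'"
  shows "ip (translate \<sigma> g) (translate \<sigma> g') = ip g g'"
  using assms(1)
proof (induction rule: kernel_graph.induct)
  case zero
  then show ?case
    using kernel_graph_in_V[OF g'] by (simp add: translate_zero ip_zero_left)
next
  case (kernel y)
  have "ip (translate \<sigma> (kernel_section y)) (translate \<sigma> g') = translate \<sigma> g' (T \<sigma> y)"
    using kernel kernel_graph_in_V[OF g']
    by (simp add: translate_kernel_section ip_commute kernel_section_in_V action_in_space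
        ip_kernel_section)
  also have "\<dots> = ip (kernel_section y) g'"
    using kernel kernel_graph_in_V[OF g']
    by (simp add: translate_def ext0_def action_in_space action_neg_cancel ip_commute
        kernel_section_in_V ip_kernel_section)
  finally show ?case unfolding kernel_section_def[symmetric] .
next
  case (add g1 l1 g2 l2)
  then show ?case
    using kernel_graph_in_V[OF g'] kernel_graph_in_V[OF add.hyps(1)] kernel_graph_in_V[OF add.hyps(2)]
    by (simp add: translate_add ip_add_left)
next
  case (scale g l c)
  then show ?case
    using kernel_graph_in_V[OF g'] kernel_graph_in_V[OF scale.hyps]
    by (simp add: translate_scale ip_scale_left)
qed

lemma kernel_graph_symmetrize_integral:
  assumes "\<gamma> \<in> V" "(g, l) \<in> graph (symmetrize \<mu> M T \<gamma>)"
  shows "integrable \<mu> (\<lambda>\<sigma>. ip \<gamma> (translate \<sigma> g)) \<and> l = (\<integral>\<sigma>. ip \<gamma> (translate \<sigma> g) \<partial>\<mu>)"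
  using assms(2)
proof (induction rule: kernel_graph.induct)
  case zero
  then show ?case
    using assms(1) by (simp add: translate_zero ip_zero_right)
next
  case (kernel y)
  have "ip \<gamma> (translate \<sigma> (kernel_section y)) = \<gamma> (T \<sigma> y)" for \<sigma>
    using kernel assms(1) by (simp add: translate_kernel_section ip_kernel_section action_in_space)
  then show ?case
    using kernel integrable_orbit[OF assms(1) kernel]
    unfolding kernel_section_def[symmetric] by (simp add: symmetrize_def ext0_def)
next
  case (add g1 l1 g2 l2)
  then show ?case
    using kernel_graph_in_V[OF add.hyps(1)] kernel_graph_in_V[OF add.hyps(2)] assms(1)
    by (simp add: translate_add ip_add_right)
next
  case (scale g l c)
  then show ?case
    using kernel_graph_in_V[OF scale.hyps] assms(1)
    by (simp add: translate_scale ip_scale_right)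
qed

lemma kernel_graph_symmetrize_bounded:
  assumes \<gamma>: "\<gamma> \<in> V" and gl: "(g, l) \<in> graph (symmetrize \<mu> M T \<gamma>)"
  shows "\<bar>l\<bar> \<le> hnorm ip \<gamma> * hnorm ip g"
proof -
  interpret prob_space \<mu> by (rule prob_space)
  have int: "integrable \<mu> (\<lambda>\<sigma>. ip \<gamma> (translate \<sigma> g))"
    and l: "l = (\<integral>\<sigma>. ip \<gamma> (translate \<sigma> g) \<partial>\<mu>)"
    using kernel_graph_symmetrize_integral[OF \<gamma> gl] by auto
  have "\<bar>ip \<gamma> (translate \<sigma> g)\<bar> \<le> hnorm ip \<gamma> * hnorm ip g" for \<sigma>
    using ip_cauchy_schwarz[OF \<gamma>, of "translate \<sigma> g"] kernel_graph_in_V[OF gl]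
      translate_isometric[OF gl gl] by (simp add: hnorm_def)
  then have "(\<integral>\<sigma>. \<bar>ip \<gamma> (translate \<sigma> g)\<bar> \<partial>\<mu>) \<le> hnorm ip \<gamma> * hnorm ip g"
    using int by (intro integral_le_const) auto
  moreover have "\<bar>l\<bar> \<le> (\<integral>\<sigma>. \<bar>ip \<gamma> (translate \<sigma> g)\<bar> \<partial>\<mu>)"
    using integral_norm_bound[of \<mu> "\<lambda>\<sigma>. ip \<gamma> (translate \<sigma> g)"] by (simp add: l)
  ultimately show ?thesis by linarith
qed

theorem symmetrize_contraction:
  assumes \<gamma>: "\<gamma> \<in> V"
  shows "symmetrize \<mu> M T \<gamma> \<in> V" "hnorm ip (symmetrize \<mu> M T \<gamma>) \<le> hnorm ip \<gamma>"
proof -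
  let ?f = "symmetrize \<mu> M T \<gamma>"
  interpret bounded_functional_graph V ip "graph ?f" "hnorm ip \<gamma>"
  proof
    show "(g, l) \<in> graph ?f \<Longrightarrow> g \<in> V" for g l
      using kernel_graph_in_V by blast
  qed (simp_all add: kernel_graph.intros kernel_graph_symmetrize_bounded[OF \<gamma>] hnorm_nonneg[OF \<gamma>])
  obtain h where h: "h \<in> V" "hnorm ip h \<le> hnorm ip \<gamma>" and repr: "\<And>g l. (g, l) \<in> graph ?f \<Longrightarrow> ip h g = l"
    using representer_exists by blast
  have "h x = ?f x" for x
  proof (cases "x \<in> space M")
    case True
    then show ?thesis
      using repr[OF kernel_graph.kernel[OF True]] ip_kernel_section[OF h(1) True]
      by (simp add: kernel_section_def)
  next
    case False
    then show ?thesis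
      using fun_cong[OF ext0_in_V[OF h(1)], of x] by (simp add: symmetrize_def ext0_def)
  qed
  then have "h = ?f" by blast
  with h show "?f \<in> V" "hnorm ip ?f \<le> hnorm ip \<gamma>" by auto
qed

end

theorem lemma2:
  fixes M :: "'a measure"
    and \<mu> :: "'g::{topological_group_add, t2_space} measure"
    and T :: "'g \<Rightarrow> 'a \<Rightarrow> 'a"
    and V :: "('a \<Rightarrow> real) set"
    and ip :: "('a \<Rightarrow> real) \<Rightarrow> ('a \<Rightarrow> real) \<Rightarrow> real"
    and k :: "'a \<Rightarrow> 'a \<Rightarrow> real"
  assumes compact_group: "compact (UNIV :: 'g set)"
    and haar: "haar_probability \<mu>"
    and action: "measurable_action M T"
    and rkhs: "rkhs (space M) V ip k"
    and separable: "separable_hs V ip"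
    and bounded_measurable: "\<forall>f \<in> V. f \<in> borel_measurable M \<and> (\<exists>B. \<forall>x \<in> space M. \<bar>f x\<bar> \<le> B)"
    and invariant: "\<forall>\<sigma>. \<forall>x \<in> space M. \<forall>y \<in> space M. k (T \<sigma> x) (T \<sigma> y) = k x y"
  shows "symmetrize \<mu> M T ` {\<gamma> \<in> V. hnorm ip \<gamma> \<le> 1} \<subseteq> {\<gamma> \<in> V. hnorm ip \<gamma> \<le> 1}"
proof -
  have "prob_space \<mu>" "sets \<mu> = sets borel"
    using haar by (simp_all add: haar_probability_def)
  then interpret invariant_kernel_action M V ip k \<mu> T
    using action rkhs bounded_measurable invariant by (simp add: invariant_kernel_action_def)
  show ?thesis
    using symmetrize_contraction order_trans by blast
qed

end
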